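(* Let $N\ge 1$ be an integer and let $\mathcal S=(\mathbf s^0,\dots,\mathbf s^{M-1})$ be an $(M,1,\mathbb L)$-$N$-CO-SF in which every sequence $\mathbf s^m$ is nonzero. Then $M\le N$. Moreover, this bound is attainable: for every $N\ge1$ there exists an $(N,1,\mathbb L)$-$N$-CO-SF consisting of nonzero sequences.
   Context: All sequences are finite complex sequences. A sequence $\mathbf s=(s_0,\dots,s_{L-1})$ of length $L$ is identified with the function $s:\mathbb Z\to\mathbb C$ given by $s(n)=s_n$ for $0\le n<L$ and $s(n)=0$ otherwise. For sequences $\mathbf s,\mathbf s'$ of lengths $L,L'$ (possibly different), the aperiodic correlation is $R_{\mathbf s,\mathbf s'}(\tau)=\sum_{l=0}^{L-1}s(l)\,\overline{s'(l+\tau)}$ for $\tau\in\mathbb Z$. The energy of $\mathbf s$ is $E_{\mathbf s}=R_{\mathbf s,\mathbf s}(0)$. An $(M,1,\mathbb L)$-$N$-shift cross-orthogonal sequence family ($N$-CO-SF) is an indexed family $(\mathbf s^0,\dots,\mathbf s^{M-1})$ of complex sequences, where $\mathbf s^m$ has length $L^{(m)}$ divisible by $N$, and $\mathbb L$ is the set of distinct values among $L^{(0)},\dots,L^{(M-1)}$, such that for all $0\le m,m'<M$ and all $k\in\mathbb Z$, $R_{\mathbf s^m,\mathbf s^{m'}}(kN)=E_{\mathbf s^m}\,\delta(m-m')\,\delta(k)$, where $\delta$ is the Kronecker delta ($\delta(0)=1$, $\delta(x)=0$ for $x\neq0$). *)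

theory Defs
  imports Complex_Main
begin

definition seqfun :: "complex list \<Rightarrow> int \<Rightarrow> complex" where
  "seqfun s n = (if 0 \<le> n \<and> n < int (length s) then s ! nat n else 0)"

definition acorr :: "complex list \<Rightarrow> complex list \<Rightarrow> int \<Rightarrow> complex" where
  "acorr s s' \<tau> = (\<Sum>l<length s. seqfun s (int l) * cnj (seqfun s' (int l + \<tau>)))"

definition energy :: "complex list \<Rightarrow> complex" where
  "energy s = acorr s s 0"

text \<open>An (M,1,L)-N-shift cross-orthogonal sequence family, M = length S,
  L = set of the lengths (determined by the family).\<close>
definition is_N_CO_SF :: "nat \<Rightarrow> complex list list \<Rightarrow> bool" where
  "is_N_CO_SF N S \<longleftrightarrow>
     (\<forall>m < length S. N dvd length (S ! m)) \<and>
     (\<forall>m < length S. \<forall>m' < length S. \<forall>k::int.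
        acorr (S ! m) (S ! m') (k * int N) =
          (if m = m' \<and> k = 0 then energy (S ! m) else 0))"

definition nonzero_seq :: "complex list \<Rightarrow> bool" where
  "nonzero_seq s \<longleftrightarrow> (\<exists>x \<in> set s. x \<noteq> 0)"

end

theory Submission imports Defs "HOL-Library.Function_Algebras" begin

(* Upper bound: let S = (s^0,...,s^(M-1)) be an N-CO-SF of nonzero sequences, c_m = L^(m)/N
   and K = c_0 + ... + c_(M-1). Shifting s^m by kN for k = 0..K-c_m keeps it inside the
   window {0..KN-1}. The N-shift cross-orthogonality says exactly that all these shifted
   copies are pairwise orthogonal for the standard Hermitian inner product on the window,
   and each has nonzero squared norm E_(s^m). Pairwise orthogonal nonzero vectors of a
   KN-dimensional space are linearly independent, so there are at most KN of them:
   sum_m (K - c_m + 1) <= KN, i.e. M(K+1) <= (N+1)K < (N+1)(K+1), whence M <= N.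
   Attainability: the N unit sequences of length N form an (N,1,{N})-N-CO-SF. *)

definition window_inner :: "nat \<Rightarrow> (nat \<Rightarrow> complex) \<Rightarrow> (nat \<Rightarrow> complex) \<Rightarrow> complex" where
  "window_inner W f g = (\<Sum>i<W. f i * cnj (g i))"

interpretation fun_space: vector_space "\<lambda>(c::complex) (f::nat \<Rightarrow> complex). (\<lambda>i. c * f i)"
  by unfold_locales (auto simp: fun_eq_iff algebra_simps)

lemma sum_fun_apply:
  "finite A \<Longrightarrow> (\<Sum>x\<in>A. (F x :: nat \<Rightarrow> complex)) j = (\<Sum>x\<in>A. F x j)"
  by (induction A rule: finite_induct) auto

lemma orthogonal_family_independent:
  fixes A :: "(nat \<Rightarrow> complex) set"
  assumes fin: "finite A"
    and orth: "\<And>x y. x \<in> A \<Longrightarrow> y \<in> A \<Longrightarrow> x \<noteq> y \<Longrightarrow> window_inner W y x = 0"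
    and nz: "\<And>x. x \<in> A \<Longrightarrow> window_inner W x x \<noteq> 0"
  shows "fun_space.independent A"
proof (rule fun_space.independent_if_scalars_zero[OF fin])
  fix f x assume comb: "(\<Sum>y\<in>A. (\<lambda>i. f y * y i)) = 0" and x: "x \<in> A"
  have pointwise: "(\<Sum>y\<in>A. f y * y i) = 0" for i
    using fun_cong[OF comb, of i] by (simp add: sum_fun_apply[OF fin])
  have others: "(\<Sum>y\<in>A-{x}. f y * window_inner W y x) = 0"
    using orth x by (intro sum.neutral) auto
  have "0 = (\<Sum>i<W. (\<Sum>y\<in>A. f y * y i) * cnj (x i))"
    using pointwise by simp
  also have "\<dots> = (\<Sum>y\<in>A. f y * window_inner W y x)"
    unfolding window_inner_def
    by (simp add: sum_distrib_left sum_distrib_right sum.swap[of _ A] mult.assoc)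
  also have "\<dots> = f x * window_inner W x x"
    using others by (simp add: sum.remove[OF fin x])
  finally show "f x = 0" using nz[OF x] by simp
qed

lemma window_supported_in_span:
  assumes supp: "\<And>i. i \<ge> W \<Longrightarrow> y i = 0"
  shows "y \<in> fun_space.span ((\<lambda>i j. if j = i then 1 else 0) ` {..<W})"
proof -
  have "y = (\<Sum>i<W. (\<lambda>j. y i * (if j = i then 1 else 0)))"
  proof
    fix j
    have "(\<Sum>i<W. (\<lambda>j. y i * (if j = i then 1 else 0))) j = (\<Sum>i<W. if j = i then y i else 0)"
      unfolding sum_fun_apply[OF finite_lessThan] by (rule sum.cong) auto
    also have "\<dots> = y j" using supp[of j] by (simp add: sum.delta)
    finally show "y j = (\<Sum>i<W. (\<lambda>j. y i * (if j = i then 1 else 0))) j" by simp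
  qed
  also have "\<dots> \<in> fun_space.span ((\<lambda>i j. if j = i then 1 else 0) ` {..<W})"
    by (intro fun_space.span_sum fun_space.span_scale fun_space.span_base) auto
  finally show ?thesis .
qed

lemma orthogonal_family_card_le:
  fixes A :: "(nat \<Rightarrow> complex) set"
  assumes fin: "finite A"
    and supp: "\<And>y i. y \<in> A \<Longrightarrow> i \<ge> W \<Longrightarrow> y i = 0"
    and orth: "\<And>x y. x \<in> A \<Longrightarrow> y \<in> A \<Longrightarrow> x \<noteq> y \<Longrightarrow> window_inner W y x = 0"
    and nz: "\<And>x. x \<in> A \<Longrightarrow> window_inner W x x \<noteq> 0"
  shows "card A \<le> W"
proof -
  let ?E = "(\<lambda>i j. if j = i then (1::complex) else 0) ` {..<W}"
  have "A \<subseteq> fun_space.span ?E"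
    using supp window_supported_in_span by blast
  hence "card A \<le> card ?E"
    using fun_space.independent_span_bound orthogonal_family_independent[OF fin orth nz]
    by blast
  also have "\<dots> \<le> W" using card_image_le[of "{..<W}"] by simp
  finally show ?thesis .
qed

definition shift :: "complex list \<Rightarrow> nat \<Rightarrow> nat \<Rightarrow> complex" where
  "shift s d = (\<lambda>i. seqfun s (int i - int d))"

lemma seqfun_outside: "n < 0 \<or> n \<ge> int (length s) \<Longrightarrow> seqfun s n = 0"
  unfolding seqfun_def by auto

lemma shift_outside: "i < d \<or> d + length s \<le> i \<Longrightarrow> shift s d i = 0"
  unfolding shift_def by (rule seqfun_outside) linarith

lemma energy_eq_sum_norms: "energy s = of_real (\<Sum>l<length s. (cmod (s ! l))\<^sup>2)"
  unfolding energy_def acorr_def seqfun_def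
  by (simp add: complex_norm_square[symmetric] of_real_sum)

lemma energy_nonzero:
  assumes "nonzero_seq s" shows "energy s \<noteq> 0"
proof -
  obtain j where j: "j < length s" "s ! j \<noteq> 0"
    using assms unfolding nonzero_seq_def by (auto simp: in_set_conv_nth)
  have "(\<Sum>l<length s. (cmod (s ! l))\<^sup>2) > 0"
    using j by (intro sum_pos2[of "{..<length s}" j]) auto
  thus ?thesis unfolding energy_eq_sum_norms of_real_eq_0_iff by simp
qed

lemma window_inner_shift:
  fixes k k' N W :: nat
  assumes "k * N + length s \<le> W"
  shows "window_inner W (shift s (k*N)) (shift s' (k'*N)) = acorr s s' ((int k - int k') * int N)"
proof -
  let ?g = "\<lambda>i. shift s (k*N) i * cnj (shift s' (k'*N) i)"
  have "window_inner W (shift s (k*N)) (shift s' (k'*N)) = (\<Sum>i\<in>{k*N..<k*N + length s}. ?g i)"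
    unfolding window_inner_def
  proof (rule sum.mono_neutral_right)
    show "\<forall>i\<in>{..<W} - {k*N..<k*N + length s}. ?g i = 0"
      by (auto simp: shift_outside)
  qed (use assms in auto)
  also have "\<dots> = (\<Sum>l<length s. ?g (l + k*N))"
    using sum.shift_bounds_nat_ivl[of ?g 0 "k*N" "length s"]
    by (simp add: lessThan_atLeast0 add.commute)
  also have "\<dots> = acorr s s' ((int k - int k') * int N)"
    unfolding acorr_def shift_def by (rule sum.cong) (auto simp: algebra_simps)
  finally show ?thesis .
qed

lemma co_sf_shifts_orthogonal:
  fixes k k' W :: nat
  assumes co: "is_N_CO_SF N S" and m: "m < length S" and m': "m' < length S"
    and fits: "k * N + length (S ! m) \<le> W"
  shows "window_inner W (shift (S ! m) (k*N)) (shift (S ! m') (k'*N))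
         = (if m = m' \<and> k = k' then energy (S ! m) else 0)"
proof -
  have "acorr (S ! m) (S ! m') ((int k - int k') * int N)
        = (if m = m' \<and> int k - int k' = 0 then energy (S ! m) else 0)"
    using co m m' unfolding is_N_CO_SF_def by blast
  thus ?thesis using window_inner_shift[OF fits] by simp
qed

text \<open>Counting the placements: copy m can be delayed by k N for k = 0..K - c_m, where
  K = c_0 + ... + c_(M-1).\<close>
lemma placement_count:
  fixes M :: nat and c :: "nat \<Rightarrow> nat"
  defines "K \<equiv> \<Sum>j<M. c j"
  shows "card (SIGMA m:{..<M}. {..K - c m}) + K = M * (K + 1)"
proof -
  have le: "m < M \<Longrightarrow> c m \<le> K" for m
    unfolding K_def by (rule member_le_sum) auto
  have "card (SIGMA m:{..<M}. {..K - c m}) = (\<Sum>m<M. K - c m + 1)"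
    by (simp add: card_SigmaI)
  hence "card (SIGMA m:{..<M}. {..K - c m}) + K = (\<Sum>m<M. K - c m + 1 + c m)"
    by (simp only: sum.distrib) (simp add: K_def)
  also have "\<dots> = (\<Sum>m<M. K + 1)" using le by (intro sum.cong) auto
  finally show ?thesis by simp
qed

lemma co_sf_size_le:
  assumes co: "is_N_CO_SF N S" and nz: "\<forall>m < length S. nonzero_seq (S ! m)"
  shows "length S \<le> N"
proof -
  define M where "M = length S"
  define c where "c m = length (S ! m) div N" for m
  define K where "K = (\<Sum>m<M. c m)"
  define I where "I = (SIGMA m:{..<M}. {..K - c m})"
  define v where "v = (\<lambda>(m, k). shift (S ! m) (k*N))"
  have fits: "k * N + length (S ! m) \<le> K * N" if "(m, k) \<in> I" for m k
  proof -
    have m: "m < M" and k: "k \<le> K - c m" using that unfolding I_def by auto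
    have "length (S ! m) = c m * N"
      using co m unfolding is_N_CO_SF_def M_def c_def by auto
    hence "k * N + length (S ! m) = (k + c m) * N" by (simp add: algebra_simps)
    also have "\<dots> \<le> K * N"
      using k m unfolding K_def by (intro mult_le_mono1) (simp add: le_diff_conv2 member_le_sum)
    finally show ?thesis .
  qed
  have orth: "window_inner (K*N) (v a) (v b) = (if a = b then energy (S ! fst a) else 0)"
    if "a \<in> I" "b \<in> I" for a b
    using that fits co_sf_shifts_orthogonal[OF co] unfolding v_def I_def M_def
    by (cases a; cases b) auto
  have pos: "energy (S ! fst a) \<noteq> 0" if "a \<in> I" for a
    using that nz energy_nonzero unfolding I_def M_def by auto
  have "inj_on v I"
  proof (rule inj_onI)
    fix a b assume a: "a \<in> I" and b: "b \<in> I" and same: "v a = v b"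
    have "window_inner (K*N) (v a) (v b) \<noteq> 0"
      using orth[OF a a] pos[OF a] same by simp
    thus "a = b" using orth[OF a b] by presburger
  qed
  moreover have "card (v ` I) \<le> K * N"
  proof (rule orthogonal_family_card_le)
    fix y i assume "y \<in> v ` I" "K * N \<le> i"
    thus "y i = 0" using fits unfolding v_def by (force intro: shift_outside)
  next
    show "finite (v ` I)" unfolding I_def by simp
  qed (use orth pos in auto)
  ultimately have "card I \<le> K * N" by (simp add: card_image)
  hence "M * (K + 1) \<le> (N + 1) * K"
    using placement_count[of M c] unfolding I_def K_def by (simp add: algebra_simps)
  also have "\<dots> < (N + 1) * (K + 1)" by simp
  finally show ?thesis unfolding M_def by (simp only: mult_less_cancel2) simp
qed

definition unit_seq :: "nat \<Rightarrow> nat \<Rightarrow> complex list" where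
  "unit_seq N m = map (\<lambda>i. if i = m then 1 else 0) [0..<N]"

lemma length_unit_seq [simp]: "length (unit_seq N m) = N"
  unfolding unit_seq_def by simp

lemma seqfun_unit_seq: "seqfun (unit_seq N m) j = (if j = int m \<and> m < N then 1 else 0)"
  unfolding seqfun_def unit_seq_def by auto

lemma residue_shift_unique:
  fixes m m' N :: nat and k :: int
  assumes "m < N" "m' < N" "int m + k * int N = int m'"
  shows "k = 0"
proof -
  have "\<bar>k\<bar> * int N = \<bar>int m' - int m\<bar>"
    using assms(3) by (metis abs_mult abs_of_nat add_diff_cancel_left')
  also have "\<dots> < 1 * int N" using assms(1,2) by linarith
  finally have "\<bar>k\<bar> < 1"
    by (rule mult_less_cancel_right_pos[THEN iffD1, rotated]) (use assms in linarith)
  thus ?thesis by simp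
qed

lemma acorr_unit_seq:
  assumes "m < N" "m' < N"
  shows "acorr (unit_seq N m) (unit_seq N m') (k * int N) = (if m = m' \<and> k = 0 then 1 else 0)"
proof -
  have "acorr (unit_seq N m) (unit_seq N m') (k * int N)
        = (\<Sum>l<N. if l = m then cnj (seqfun (unit_seq N m') (int l + k * int N)) else 0)"
    unfolding acorr_def by (rule sum.cong) (auto simp: seqfun_unit_seq)
  also have "\<dots> = (if int m + k * int N = int m' then 1 else 0)"
    using assms by (simp add: seqfun_unit_seq)
  also have "\<dots> = (if m = m' \<and> k = 0 then 1 else 0)"
    using residue_shift_unique[OF assms, of k] by auto
  finally show ?thesis .
qed

lemma unit_family_co_sf:
  "is_N_CO_SF N (map (unit_seq N) [0..<N]) \<and> (\<forall>m < N. nonzero_seq (unit_seq N m))"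
proof -
  have "energy (unit_seq N m) = 1" if "m < N" for m
    unfolding energy_def using acorr_unit_seq[OF that that, of 0] by simp
  moreover have "nonzero_seq (unit_seq N m)" if "m < N" for m
    using that unfolding nonzero_seq_def unit_seq_def by (auto simp: in_set_conv_nth)
  ultimately show ?thesis
    unfolding is_N_CO_SF_def using acorr_unit_seq by (auto simp: unit_seq_def)
qed

theorem theorem1:
  fixes N :: nat
  assumes "N \<ge> 1"
  shows "(\<forall>S. is_N_CO_SF N S \<and> (\<forall>m < length S. nonzero_seq (S ! m)) \<longrightarrow> length S \<le> N)
         \<and> (\<exists>S. length S = N \<and> is_N_CO_SF N S \<and> (\<forall>m < length S. nonzero_seq (S ! m)))"
proof
  show "\<forall>S. is_N_CO_SF N S \<and> (\<forall>m < length S. nonzero_seq (S ! m)) \<longrightarrow> length S \<le> N"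
    using co_sf_size_le by blast
  show "\<exists>S. length S = N \<and> is_N_CO_SF N S \<and> (\<forall>m < length S. nonzero_seq (S ! m))"
    using unit_family_co_sf by (intro exI[of _ "map (unit_seq N) [0..<N]"]) simp
qed

end
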